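(* Let $(B_a)_{a\in A}$ be a polynomial and let $S:=\sum_{a\in A}\mathcal P(B_a)$. Suppose $(X,t)$ is an algebra for $(B_a)_{a\in A}$ satisfying all image preserving equations with variable set $S$, i.e. for all $a,c\in A$, all $l:B_a\to S$, $r:B_c\to S$ with equal images, and all $k:S\to X$, one has $t(a,k\circ l)=t(c,k\circ r)$. Then there is a unique homomorphism (class function) $h:H((B_a)_{a\in A})\to X$, i.e. a unique class function with $h(\{f(b)\mid b\in B_a\})=t(a,h\circ f)$ for all $a\in A$ and $f:B_a\to H((B_a)_{a\in A})$.
   Context: Work in $\mathbf{ZF}$. A polynomial is a set $A$ with a family of sets $(B_a)_{a\in A}$. An algebra for it is a set $X$ with a function $t:\sum_{a\in A}X^{B_a}\to X$; a homomorphism $(X,s)\to(Y,t)$ is a (class) function $h$ with $h(s(a,f))=t(a,h\circ f)$ for all $a\in A$, $f:B_a\to X$; the same definitions apply to classes with class functions. A set $X$ is small relative to $(B_a)_{a\in A}$ if there are $a\in A$ and a surjection $B_a\to X$; it is hereditarily small if it is small and all its elements are hereditarily small. $H((B_a)_{a\in A})$ is the class of hereditarily small sets, with algebra structure $s(a,f):=\{f(b)\mid b\in B_a\}$. *)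

theory Defs
  imports "HOL-Library.FuncSet"
begin

text \<open>ZF sets are modelled by an abstract universe: a type 'v with a membership
relation mem (mem z y means z is an element of y), assumed extensional and
well-founded, and closed under images of the arities B a (replacement).\<close>

definition small :: "'a set \<Rightarrow> ('a \<Rightarrow> 'b set) \<Rightarrow> ('v \<Rightarrow> 'v \<Rightarrow> bool) \<Rightarrow> 'v \<Rightarrow> bool" where
  "small A B mem x \<longleftrightarrow> (\<exists>a\<in>A. \<exists>g. g ` B a = {z. mem z x})"

definition hsmall :: "'a set \<Rightarrow> ('a \<Rightarrow> 'b set) \<Rightarrow> ('v \<Rightarrow> 'v \<Rightarrow> bool) \<Rightarrow> 'v \<Rightarrow> bool" where
  "hsmall A B mem x \<longleftrightarrow> (\<forall>y. mem\<^sup>*\<^sup>* y x \<longrightarrow> small A B mem y)"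

definition sH :: "('a \<Rightarrow> 'b set) \<Rightarrow> ('v \<Rightarrow> 'v \<Rightarrow> bool) \<Rightarrow> 'a \<Rightarrow> ('b \<Rightarrow> 'v) \<Rightarrow> 'v" where
  "sH B mem a f = (THE y. \<forall>z. mem z y \<longleftrightarrow> z \<in> f ` B a)"

definition is_algebra :: "'a set \<Rightarrow> ('a \<Rightarrow> 'b set) \<Rightarrow> 'x set \<Rightarrow> ('a \<Rightarrow> ('b \<Rightarrow> 'x) \<Rightarrow> 'x) \<Rightarrow> bool" where
  "is_algebra A B X t \<longleftrightarrow> (\<forall>a\<in>A. \<forall>k\<in>B a \<rightarrow>\<^sub>E X. t a k \<in> X)"

definition Svars :: "'a set \<Rightarrow> ('a \<Rightarrow> 'b set) \<Rightarrow> ('a \<times> 'b set) set" where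
  "Svars A B = Sigma A (\<lambda>a. Pow (B a))"

definition satisfies_image_preserving :: "'a set \<Rightarrow> ('a \<Rightarrow> 'b set) \<Rightarrow> 'x set \<Rightarrow> ('a \<Rightarrow> ('b \<Rightarrow> 'x) \<Rightarrow> 'x) \<Rightarrow> bool" where
  "satisfies_image_preserving A B X t \<longleftrightarrow>
     (\<forall>a\<in>A. \<forall>c\<in>A. \<forall>l\<in>B a \<rightarrow> Svars A B. \<forall>r\<in>B c \<rightarrow> Svars A B. \<forall>k\<in>Svars A B \<rightarrow> X.
        l ` B a = r ` B c \<longrightarrow>
        t a (\<lambda>b\<in>B a. k (l b)) = t c (\<lambda>b\<in>B c. k (r b)))"

definition is_H_hom :: "'a set \<Rightarrow> ('a \<Rightarrow> 'b set) \<Rightarrow> ('v \<Rightarrow> 'v \<Rightarrow> bool) \<Rightarrow> 'x set \<Rightarrow> ('a \<Rightarrow> ('b \<Rightarrow> 'x) \<Rightarrow> 'x) \<Rightarrow> ('v \<Rightarrow> 'x) \<Rightarrow> bool" where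
  "is_H_hom A B mem X t h \<longleftrightarrow>
     (\<forall>x. hsmall A B mem x \<longrightarrow> h x \<in> X) \<and>
     (\<forall>a\<in>A. \<forall>f. f ` B a \<subseteq> {x. hsmall A B mem x} \<longrightarrow>
        h (sH B mem a f) = t a (\<lambda>b\<in>B a. h (f b)))"

end

theory Submission
  imports Defs
begin

text \<open>Every hereditarily small set x is of the form s(a, g) for a presentation g : B a \<rightarrow> x,
so by \<in>-induction a homomorphism must satisfy h x = t(a, h \<circ> g); this gives uniqueness, and
taking it as a well-founded recursive definition (with a chosen presentation) gives existence.
The value does not depend on the presentation: two presentations f : B a \<rightarrow> x and
g : B c \<rightarrow> x both factor through S via the injective map y \<mapsto> (a, f^-1{y}), so they are
related by an image preserving equation.\<close>

lemma satisfies_image_preservingD: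
  assumes "satisfies_image_preserving A B X t" and "a \<in> A" and "c \<in> A"
    and "l \<in> B a \<rightarrow> Svars A B" and "r \<in> B c \<rightarrow> Svars A B" and "k \<in> Svars A B \<rightarrow> X"
    and "l ` B a = r ` B c"
  shows "t a (\<lambda>b\<in>B a. k (l b)) = t c (\<lambda>b\<in>B c. k (r b))"
  using assms unfolding satisfies_image_preserving_def by blast

lemma image_preserving_eq:
  assumes alg: "is_algebra A B X t"
    and eqns: "satisfies_image_preserving A B X t"
    and aA: "a \<in> A" and cA: "c \<in> A"
    and img: "f ` B a = g ` B c"
    and hX: "\<And>b. b \<in> B a \<Longrightarrow> h (f b) \<in> X"
  shows "t a (\<lambda>b\<in>B a. h (f b)) = t c (\<lambda>b\<in>B c. h (g b))"
proof -
  define Y where "Y = f ` B a"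
  define e where "e = (\<lambda>y. (a, {b\<in>B a. f b = y}))"
  have inj: "inj_on e Y"
  proof (rule inj_onI)
    fix y1 y2 assume "y1 \<in> Y" "y2 \<in> Y" "e y1 = e y2"
    then obtain b where "b \<in> B a" "f b = y1" "b \<in> {b\<in>B a. f b = y2}"
      unfolding Y_def e_def by auto
    then show "y1 = y2" by simp
  qed
  have eS: "e y \<in> Svars A B" for y
    using aA by (auto simp: e_def Svars_def)
  then have l: "(\<lambda>b. e (f b)) \<in> B a \<rightarrow> Svars A B" and r: "(\<lambda>b. e (g b)) \<in> B c \<rightarrow> Svars A B"
    by auto
  define x0 where "x0 = t a (\<lambda>b\<in>B a. h (f b))"
  have x0X: "x0 \<in> X"
    using alg aA hX by (auto simp: x0_def is_algebra_def)
  \<comment> \<open>k inverts e on its image; any element of X serves as the value elsewhere\<close>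
  define k where "k = (\<lambda>s. if s \<in> e ` Y then h (inv_into Y e s) else x0)"
  have hY: "h y \<in> X" if "y \<in> Y" for y
    using hX that by (auto simp: Y_def)
  have kX: "k \<in> Svars A B \<rightarrow> X"
    unfolding k_def using x0X hY inv_into_into[of _ e Y] by (auto simp: Pi_def)
  have ke: "k (e y) = h y" if "y \<in> Y" for y
    unfolding k_def using inj that by auto
  have "(\<lambda>b. e (f b)) ` B a = (\<lambda>b. e (g b)) ` B c"
    using img by (metis image_image)
  then have "t a (\<lambda>b\<in>B a. k (e (f b))) = t c (\<lambda>b\<in>B c. k (e (g b)))"
    by (rule satisfies_image_preservingD[OF eqns aA cA l r kX])
  moreover have "(\<lambda>b\<in>B a. k (e (f b))) = (\<lambda>b\<in>B a. h (f b))"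
    using ke unfolding Y_def by (intro restrict_ext) auto
  moreover have "(\<lambda>b\<in>B c. k (e (g b))) = (\<lambda>b\<in>B c. h (g b))"
    using ke img unfolding Y_def by (intro restrict_ext) (metis imageI)
  ultimately show ?thesis by (simp add: x0_def)
qed

lemma hsmall_imp_small: "hsmall A B mem x \<Longrightarrow> small A B mem x"
  unfolding hsmall_def by blast

lemma hsmall_mem: "hsmall A B mem x \<Longrightarrow> mem y x \<Longrightarrow> hsmall A B mem y"
  unfolding hsmall_def by (meson rtranclp.rtrancl_into_rtrancl)

definition presentation :: "'a set \<Rightarrow> ('a \<Rightarrow> 'b set) \<Rightarrow> ('v \<Rightarrow> 'v \<Rightarrow> bool) \<Rightarrow> 'v \<Rightarrow> 'a \<times> ('b \<Rightarrow> 'v)" where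
  "presentation A B mem x = (SOME p. fst p \<in> A \<and> snd p ` B (fst p) = {z. mem z x})"

lemma presentation:
  assumes "small A B mem x"
  defines "p \<equiv> presentation A B mem x"
  shows "fst p \<in> A" and "snd p ` B (fst p) = {z. mem z x}"
proof -
  from assms obtain a g where "a \<in> A" "g ` B a = {z. mem z x}"
    unfolding small_def by blast
  then have "\<exists>p. fst p \<in> A \<and> snd p ` B (fst p) = {z. mem z x}"
    by (intro exI[of _ "(a, g)"]) auto
  then have "fst p \<in> A \<and> snd p ` B (fst p) = {z. mem z x}"
    unfolding p_def presentation_def by (rule someI_ex)
  then show "fst p \<in> A" and "snd p ` B (fst p) = {z. mem z x}"
    by auto
qed

definition H_rec :: "'a set \<Rightarrow> ('a \<Rightarrow> 'b set) \<Rightarrow> ('v \<Rightarrow> 'v \<Rightarrow> bool) \<Rightarrow> ('a \<Rightarrow> ('b \<Rightarrow> 'x) \<Rightarrow> 'x) \<Rightarrow> 'v \<Rightarrow> 'x" where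
  "H_rec A B mem t = wfrec {(y, x). mem y x}
     (\<lambda>h x. let p = presentation A B mem x in t (fst p) (\<lambda>b\<in>B (fst p). h (snd p b)))"

locale set_universe =
  fixes A :: "'a set" and B :: "'a \<Rightarrow> 'b set" and mem :: "'v \<Rightarrow> 'v \<Rightarrow> bool"
  assumes extensional: "\<And>x y. (\<forall>z. mem z x \<longleftrightarrow> mem z y) \<Longrightarrow> x = y"
    and foundation: "wfP mem"
    and replacement: "\<And>a f. a \<in> A \<Longrightarrow> \<exists>y. \<forall>z. mem z y \<longleftrightarrow> z \<in> f ` B a"
begin

lemma sH_eqI:
  assumes "\<forall>z. mem z x \<longleftrightarrow> z \<in> f ` B a"
  shows "sH B mem a f = x"
  unfolding sH_def by (rule the_equality) (use assms extensional in auto)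

lemma mem_sH_iff:
  assumes "a \<in> A"
  shows "mem z (sH B mem a f) \<longleftrightarrow> z \<in> f ` B a"
proof -
  obtain y where "\<forall>z. mem z y \<longleftrightarrow> z \<in> f ` B a"
    using replacement[OF assms] by blast
  then show ?thesis
    using sH_eqI by blast
qed

lemma small_sH: "a \<in> A \<Longrightarrow> small A B mem (sH B mem a f)"
  unfolding small_def using mem_sH_iff by blast

lemma H_rec_unfold:
  assumes small: "small A B mem x"
  defines "p \<equiv> presentation A B mem x"
  shows "H_rec A B mem t x = t (fst p) (\<lambda>b\<in>B (fst p). H_rec A B mem t (snd p b))"
proof -
  have wf: "wf {(y, x). mem y x}"
    using foundation by (simp add: wfp_def)
  have mem: "mem (snd p b) x" if "b \<in> B (fst p)" for b
    using presentation(2)[OF small] that by (auto simp: p_def)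
  show ?thesis
    unfolding H_rec_def wfrec[OF wf, of _ x] p_def[symmetric] Let_def
    using mem by (intro arg_cong[where f = "t _"] restrict_ext) (simp add: cut_apply)
qed

lemma H_rec_in_carrier:
  assumes alg: "is_algebra A B X t"
  shows "hsmall A B mem x \<Longrightarrow> H_rec A B mem t x \<in> X"
proof (induction x rule: wfp_induct_rule[OF foundation])
  case (1 x)
  have small: "small A B mem x"
    using "1.prems" by (rule hsmall_imp_small)
  define p where "p = presentation A B mem x"
  have "(\<lambda>b\<in>B (fst p). H_rec A B mem t (snd p b)) \<in> B (fst p) \<rightarrow>\<^sub>E X"
    using presentation(2)[OF small] "1.IH" hsmall_mem[OF "1.prems"]
    by (auto simp: p_def)
  then have "t (fst p) (\<lambda>b\<in>B (fst p). H_rec A B mem t (snd p b)) \<in> X"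
    using alg presentation(1)[OF small] unfolding is_algebra_def p_def by blast
  then show ?case
    using H_rec_unfold[OF small, of t] by (simp add: p_def)
qed

lemma H_rec_is_H_hom:
  assumes alg: "is_algebra A B X t"
    and eqns: "satisfies_image_preserving A B X t"
  shows "is_H_hom A B mem X t (H_rec A B mem t)"
  unfolding is_H_hom_def
proof (intro conjI allI impI ballI)
  fix x assume "hsmall A B mem x"
  then show "H_rec A B mem t x \<in> X"
    by (rule H_rec_in_carrier[OF alg])
next
  fix a f assume aA: "a \<in> A" and f: "f ` B a \<subseteq> {x. hsmall A B mem x}"
  define x where "x = sH B mem a f"
  define p where "p = presentation A B mem x"
  have members: "{z. mem z x} = f ` B a"
    using mem_sH_iff[OF aA] by (auto simp: x_def)
  have small: "small A B mem x"
    using small_sH[OF aA] by (simp add: x_def)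
  have img: "snd p ` B (fst p) = f ` B a"
    using presentation(2)[OF small] members by (simp add: p_def)
  have "t (fst p) (\<lambda>b\<in>B (fst p). H_rec A B mem t (snd p b)) = t a (\<lambda>b\<in>B a. H_rec A B mem t (f b))"
  proof (rule image_preserving_eq[OF alg eqns _ aA img])
    show "fst p \<in> A"
      using presentation(1)[OF small] by (simp add: p_def)
    show "H_rec A B mem t (snd p b) \<in> X" if "b \<in> B (fst p)" for b
      using that img f H_rec_in_carrier[OF alg] by blast
  qed
  then show "H_rec A B mem t (sH B mem a f) = t a (\<lambda>b\<in>B a. H_rec A B mem t (f b))"
    using H_rec_unfold[OF small, of t] by (simp add: x_def p_def)
qed

lemma H_hom_unique:
  assumes h: "is_H_hom A B mem X t h" and h': "is_H_hom A B mem X t h'"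
  shows "hsmall A B mem x \<Longrightarrow> h' x = h x"
proof (induction x rule: wfp_induct_rule[OF foundation])
  case (1 x)
  obtain a g where aA: "a \<in> A" and g: "g ` B a = {z. mem z x}"
    using hsmall_imp_small[OF "1.prems"] unfolding small_def by blast
  have g_hsmall: "g ` B a \<subseteq> {x. hsmall A B mem x}"
    using g hsmall_mem[OF "1.prems"] by auto
  have x: "x = sH B mem a g"
    by (rule sym, rule sH_eqI) (use g in auto)
  have "h' x = t a (\<lambda>b\<in>B a. h' (g b))"
    using h' aA g_hsmall unfolding x is_H_hom_def by blast
  also have "(\<lambda>b\<in>B a. h' (g b)) = (\<lambda>b\<in>B a. h (g b))"
    using "1.IH" g g_hsmall by (intro restrict_ext) auto
  also have "t a \<dots> = h x"
    using h aA g_hsmall unfolding x is_H_hom_def by metis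
  finally show ?case .
qed

end

theorem mainTheorem3:
  fixes A :: "'a set" and B :: "'a \<Rightarrow> 'b set"
    and mem :: "'v \<Rightarrow> 'v \<Rightarrow> bool"
    and X :: "'x set" and t :: "'a \<Rightarrow> ('b \<Rightarrow> 'x) \<Rightarrow> 'x"
  assumes extensional: "\<And>x y. (\<forall>z. mem z x \<longleftrightarrow> mem z y) \<Longrightarrow> x = y"
    and foundation: "wfP mem"
    and replacement: "\<And>a f. a \<in> A \<Longrightarrow> \<exists>y. \<forall>z. mem z y \<longleftrightarrow> z \<in> f ` B a"
    and alg: "is_algebra A B X t"
    and eqns: "satisfies_image_preserving A B X t"
  shows "\<exists>h. is_H_hom A B mem X t h \<and>
           (\<forall>h'. is_H_hom A B mem X t h' \<longrightarrow> (\<forall>x. hsmall A B mem x \<longrightarrow> h' x = h x))"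
proof -
  interpret set_universe A B mem
    using extensional foundation replacement by unfold_locales blast+
  have hom: "is_H_hom A B mem X t (H_rec A B mem t)"
    using alg eqns by (rule H_rec_is_H_hom)
  then show ?thesis
    using H_hom_unique[OF hom] by blast
qed

end
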